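(* Let $A=(A_{ij})$ be a real symmetric $n\times n$ matrix with eigenvalues $\lambda_1(A),\dots,\lambda_n(A)$, and let $$\mu=\frac1n\sum_{i=1}^n\lambda_i(A),\qquad \sigma^2=\frac1n\sum_{i=1}^n(\lambda_i(A)-\mu)^2,$$ with $\sigma>0$. If for some integer $k$ with $1\le k<n/2$ $$\frac1n\sum_{i\neq j}A_{ij}\ge\sigma\sqrt{\frac{(n-k)^2+k^2}{n}},$$ then the largest (rightmost) eigenvalue of $A$ is simple, and a corresponding eigenvector can be chosen (up to sign) so that it has at least $n-k+1$ nonnegative entries. *)

theory Defs
  imports "Jordan_Normal_Form.Char_Poly"
begin

definition eigenvalue_list :: "real mat \<Rightarrow> real list \<Rightarrow> bool" where
  "eigenvalue_list A ls \<longleftrightarrow> length ls = dim_row A \<and> char_poly A = (\<Prod>a\<leftarrow>ls. [:- a, 1:])"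

end

(*
  Diagonalize A = P diag(lambda) P^T with an orthonormal eigenbasis p_1, ..., p_n and expand the
  all-ones vector 1 in it: c_i = <p_i, 1>, so that sum_i c_i^2 = n. Then
    (1/n) sum_{i<>j} A_ij = (1/n) (1^T A 1 - tr A) = sum_i w_i (lambda_i - mu),   w_i = c_i^2 / n,
  a weighted average of the centred eigenvalues. If a top eigenvalue lambda_p had weight
  w_p <= s = (n - k) / n, moving weight onto p and applying Cauchy-Schwarz to the centred weights
  would bound this average by sigma * sqrt (((n - k)^2 + k^2) / n - 1), contradicting the hypothesis.
  Hence c_p^2 > n - k > n / 2 for every top index p. Two such indices would give sum_i c_i^2 > n, so
  the top eigenvalue is simple; and since (sum_i v_i)^2 <= m |v|^2 whenever v has at most m entries
  of each sign, p_p or -p_p has at least n - k + 1 nonnegative entries.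
*)

theory Submission
  imports Defs "Jordan_Normal_Form.Schur_Decomposition"
begin

(* HOL-Algebra's group order would otherwise shadow the multiplicity of polynomial roots. *)
hide_const (open) Coset.order

lemma Cauchy_Schwarz_sum:
  fixes a b :: "'i \<Rightarrow> real"
  shows "(\<Sum>i\<in>I. a i * b i)\<^sup>2 \<le> (\<Sum>i\<in>I. (a i)\<^sup>2) * (\<Sum>i\<in>I. (b i)\<^sup>2)"
proof -
  \<comment> \<open>Lagrange's identity\<close>
  have expand: "(a i * b j - a j * b i)\<^sup>2
      = (a i)\<^sup>2 * (b j)\<^sup>2 + (a j)\<^sup>2 * (b i)\<^sup>2 - 2 * ((a i * b i) * (a j * b j))" for i j
    by (simp add: power2_eq_square algebra_simps)
  have AB: "(\<Sum>i\<in>I. \<Sum>j\<in>I. (a i)\<^sup>2 * (b j)\<^sup>2) = (\<Sum>i\<in>I. (a i)\<^sup>2) * (\<Sum>i\<in>I. (b i)\<^sup>2)"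
    by (simp add: sum_product)
  have BA: "(\<Sum>i\<in>I. \<Sum>j\<in>I. (a j)\<^sup>2 * (b i)\<^sup>2) = (\<Sum>i\<in>I. (a i)\<^sup>2) * (\<Sum>i\<in>I. (b i)\<^sup>2)"
    by (subst sum.swap) (rule AB)
  have ab: "(\<Sum>i\<in>I. \<Sum>j\<in>I. (a i * b i) * (a j * b j)) = (\<Sum>i\<in>I. a i * b i)\<^sup>2"
    by (simp add: power2_eq_square sum_product)
  have "(\<Sum>i\<in>I. \<Sum>j\<in>I. (a i * b j - a j * b i)\<^sup>2)
      = (\<Sum>i\<in>I. \<Sum>j\<in>I. (a i)\<^sup>2 * (b j)\<^sup>2) + (\<Sum>i\<in>I. \<Sum>j\<in>I. (a j)\<^sup>2 * (b i)\<^sup>2)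
        - 2 * (\<Sum>i\<in>I. \<Sum>j\<in>I. (a i * b i) * (a j * b j))"
    by (simp only: expand sum_subtractf sum.distrib sum_distrib_left)
  then have "(\<Sum>i\<in>I. \<Sum>j\<in>I. (a i * b j - a j * b i)\<^sup>2)
      = 2 * ((\<Sum>i\<in>I. (a i)\<^sup>2) * (\<Sum>i\<in>I. (b i)\<^sup>2) - (\<Sum>i\<in>I. a i * b i)\<^sup>2)"
    unfolding AB BA ab by simp
  moreover have "0 \<le> (\<Sum>i\<in>I. \<Sum>j\<in>I. (a i * b j - a j * b i)\<^sup>2)"
    by (intro sum_nonneg) auto
  ultimately show ?thesis by simp
qed

lemma sum_squares_le_square_sum:
  fixes w :: "'i \<Rightarrow> real"
  assumes "finite I" and "\<And>i. i \<in> I \<Longrightarrow> 0 \<le> w i"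
  shows "(\<Sum>i\<in>I. (w i)\<^sup>2) \<le> (\<Sum>i\<in>I. w i)\<^sup>2"
proof -
  have "(\<Sum>i\<in>I. (w i)\<^sup>2) \<le> (\<Sum>i\<in>I. w i * (\<Sum>j\<in>I. w j))"
  proof (rule sum_mono)
    fix i assume i: "i \<in> I"
    then have "w i \<le> (\<Sum>j\<in>I. w j)" using assms by (intro member_le_sum) auto
    then show "(w i)\<^sup>2 \<le> w i * (\<Sum>j\<in>I. w j)"
      using assms(2)[OF i] by (simp add: power2_eq_square mult_left_mono)
  qed
  also have "\<dots> = (\<Sum>i\<in>I. w i)\<^sup>2" by (simp add: power2_eq_square sum_distrib_right)
  finally show ?thesis .
qed

lemma square_sum_subset_le:
  fixes f :: "'i \<Rightarrow> real"
  assumes "finite I" "S \<subseteq> I"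
  shows "(\<Sum>i\<in>S. f i)\<^sup>2 \<le> real (card S) * (\<Sum>i\<in>I. (f i)\<^sup>2)"
proof -
  have "(\<Sum>i\<in>S. 1 * f i)\<^sup>2 \<le> (\<Sum>i\<in>S. 1\<^sup>2) * (\<Sum>i\<in>S. (f i)\<^sup>2)"
    by (rule Cauchy_Schwarz_sum)
  also have "\<dots> = real (card S) * (\<Sum>i\<in>S. (f i)\<^sup>2)" by simp
  also have "\<dots> \<le> real (card S) * (\<Sum>i\<in>I. (f i)\<^sup>2)"
    using assms by (intro mult_left_mono sum_mono2) auto
  finally show ?thesis by simp
qed

lemma square_sum_le_sign_count:
  fixes f :: "'i \<Rightarrow> real"
  assumes I: "finite I" and pos: "card {i \<in> I. 0 \<le> f i} \<le> m" and neg: "card {i \<in> I. f i \<le> 0} \<le> m"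
  shows "(\<Sum>i\<in>I. f i)\<^sup>2 \<le> real m * (\<Sum>i\<in>I. (f i)\<^sup>2)"
proof -
  \<comment> \<open>Only the terms of the sign of the total matter; there are at most m of them.\<close>
  have bound: "(\<Sum>i\<in>I. g i)\<^sup>2 \<le> real m * (\<Sum>i\<in>I. (g i)\<^sup>2)"
    if "0 \<le> (\<Sum>i\<in>I. g i)" and "card {i \<in> I. 0 \<le> g i} \<le> m" for g :: "'i \<Rightarrow> real"
  proof -
    define S where "S = {i \<in> I. 0 \<le> g i}"
    have "(\<Sum>i\<in>I. g i) = (\<Sum>i\<in>S. g i) + (\<Sum>i\<in>I - S. g i)"
      using I by (simp add: S_def sum.subset_diff[of S I])
    moreover have "(\<Sum>i\<in>I - S. g i) \<le> 0" by (rule sum_nonpos) (auto simp: S_def)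
    ultimately have "(\<Sum>i\<in>I. g i)\<^sup>2 \<le> (\<Sum>i\<in>S. g i)\<^sup>2"
      using that(1) by (intro power_mono) auto
    also have "\<dots> \<le> real (card S) * (\<Sum>i\<in>I. (g i)\<^sup>2)"
      using I by (intro square_sum_subset_le) (auto simp: S_def)
    also have "\<dots> \<le> real m * (\<Sum>i\<in>I. (g i)\<^sup>2)"
      using that(2) by (intro mult_right_mono sum_nonneg) (auto simp: S_def)
    finally show ?thesis .
  qed
  show ?thesis
  proof (cases "0 \<le> (\<Sum>i\<in>I. f i)")
    case True
    then show ?thesis using bound pos by blast
  next
    case False
    then show ?thesis using bound[of "\<lambda>i. - f i"] neg by (simp add: sum_negf)
  qed
qed

lemma centered_weighted_sum_le:
  fixes w \<beta> :: "nat \<Rightarrow> real"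
  assumes w: "(\<Sum>i<n. w i) = 1" and \<beta>: "(\<Sum>i<n. \<beta> i) = 0"
  shows "(\<Sum>i<n. w i * \<beta> i) \<le> sqrt (\<Sum>i<n. (\<beta> i)\<^sup>2) * sqrt ((\<Sum>i<n. (w i)\<^sup>2) - 1 / real n)"
proof -
  have n: "0 < real n" using w by (cases n) auto
  define a where "a i = w i - 1 / real n" for i
  have "(\<Sum>i<n. w i * \<beta> i) = (\<Sum>i<n. a i * \<beta> i)"
    using \<beta> by (simp add: a_def left_diff_distrib sum_subtractf flip: sum_divide_distrib)
  also have "\<dots> \<le> sqrt ((\<Sum>i<n. a i * \<beta> i)\<^sup>2)" by simp
  also have "\<dots> \<le> sqrt ((\<Sum>i<n. (a i)\<^sup>2) * (\<Sum>i<n. (\<beta> i)\<^sup>2))"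
    using Cauchy_Schwarz_sum real_sqrt_le_mono by blast
  also have "(\<Sum>i<n. (a i)\<^sup>2) = (\<Sum>i<n. (w i)\<^sup>2) - 2 / real n * (\<Sum>i<n. w i) + real n * (1 / real n)\<^sup>2"
    by (simp add: a_def power2_diff sum_subtractf sum.distrib sum_distrib_left)
  also have "\<dots> = (\<Sum>i<n. (w i)\<^sup>2) - 1 / real n"
    using n w by (simp add: power2_eq_square field_simps)
  finally show ?thesis by (simp add: real_sqrt_mult mult.commute)
qed

lemma shift_weight_to_maximum:
  fixes w \<beta> :: "nat \<Rightarrow> real"
  assumes p: "p < n" and w_nonneg: "\<And>i. i < n \<Longrightarrow> 0 \<le> w i" and w_sum: "(\<Sum>i<n. w i) = 1"
    and top: "\<And>i. i < n \<Longrightarrow> \<beta> i \<le> \<beta> p" and wp: "w p \<le> s" and s: "s < 1"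
  obtains w' where "(\<Sum>i<n. w' i) = 1" "(\<Sum>i<n. (w' i)\<^sup>2) \<le> s\<^sup>2 + (1 - s)\<^sup>2"
    "(\<Sum>i<n. w i * \<beta> i) \<le> (\<Sum>i<n. w' i * \<beta> i)"
proof -
  \<comment> \<open>Moving mass from the other indices onto the maximal \<open>\<beta> p\<close> cannot decrease the weighted sum.\<close>
  define R where "R = {..<n} - {p}"
  have split: "(\<Sum>i<n. f i) = f p + (\<Sum>i\<in>R. f i)" for f :: "nat \<Rightarrow> real"
    using p by (simp add: R_def sum.remove)
  have rest: "(\<Sum>i\<in>R. w i) = 1 - w p" using w_sum split[of w] by simp
  define l where "l = (1 - s) / (1 - w p)"
  have l: "0 \<le> l" "l \<le> 1" "l * (1 - w p) = 1 - s" using wp s by (auto simp: l_def field_simps)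
  define w' where "w' i = (if i = p then s else l * w i)" for i
  have w'_R: "(\<Sum>i\<in>R. f i (w' i)) = (\<Sum>i\<in>R. f i (l * w i))" for f :: "nat \<Rightarrow> real \<Rightarrow> real"
    by (rule sum.cong) (auto simp: R_def w'_def)
  show thesis
  proof
    show "(\<Sum>i<n. w' i) = 1"
      using l(3) by (simp add: split[of w'] w'_R[of "\<lambda>_. id", simplified] rest flip: sum_distrib_left)
        (simp add: w'_def)
    have "(\<Sum>i\<in>R. (w i)\<^sup>2) \<le> (1 - w p)\<^sup>2"
      using sum_squares_le_square_sum[of R w] w_nonneg rest by (simp add: R_def)
    then have "l\<^sup>2 * (\<Sum>i\<in>R. (w i)\<^sup>2) \<le> (1 - s)\<^sup>2"
      using l by (metis mult_left_mono power_mult_distrib zero_le_power2)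
    moreover have "(\<Sum>i<n. (w' i)\<^sup>2) = s\<^sup>2 + l\<^sup>2 * (\<Sum>i\<in>R. (w i)\<^sup>2)"
      unfolding split[of "\<lambda>i. (w' i)\<^sup>2"] w'_R[of "\<lambda>_ x. x\<^sup>2"]
      by (simp add: w'_def power_mult_distrib sum_distrib_left)
    ultimately show "(\<Sum>i<n. (w' i)\<^sup>2) \<le> s\<^sup>2 + (1 - s)\<^sup>2" by simp
    have "(\<Sum>i\<in>R. w i * \<beta> i) \<le> (\<Sum>i\<in>R. w i * \<beta> p)"
      by (rule sum_mono) (use w_nonneg top in \<open>auto simp: R_def intro: mult_left_mono\<close>)
    also have "\<dots> = (1 - w p) * \<beta> p" by (simp add: rest flip: sum_distrib_right)
    finally have R_top: "(\<Sum>i\<in>R. w i * \<beta> i) \<le> (1 - w p) * \<beta> p" .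
    have "(1 - l) * (1 - w p) = s - w p" using l(3) by (simp add: algebra_simps)
    then have "(1 - l) * (\<Sum>i\<in>R. w i * \<beta> i) \<le> (s - w p) * \<beta> p"
      using mult_left_mono[OF R_top, of "1 - l"] l by (simp add: mult.assoc[symmetric])
    then have "w p * \<beta> p + (\<Sum>i\<in>R. w i * \<beta> i) \<le> s * \<beta> p + l * (\<Sum>i\<in>R. w i * \<beta> i)"
      by (simp add: algebra_simps)
    moreover have "(\<Sum>i<n. w' i * \<beta> i) = s * \<beta> p + l * (\<Sum>i\<in>R. w i * \<beta> i)"
      unfolding split[of "\<lambda>i. w' i * \<beta> i"] w'_R[of "\<lambda>i x. x * \<beta> i"]
      by (simp add: w'_def sum_distrib_left mult.assoc)
    ultimately show "(\<Sum>i<n. w i * \<beta> i) \<le> (\<Sum>i<n. w' i * \<beta> i)"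
      using split[of "\<lambda>i. w i * \<beta> i"] by linarith
  qed
qed

lemma large_top_weight:
  fixes ev c :: "nat \<Rightarrow> real" and n p :: nat and k :: real
  defines "\<mu> \<equiv> (1 / real n) * (\<Sum>j<n. ev j)"
  defines "\<sigma> \<equiv> sqrt ((1 / real n) * (\<Sum>i<n. (ev i - \<mu>)\<^sup>2))"
  assumes p: "p < n" and top: "\<And>i. i < n \<Longrightarrow> ev i \<le> ev p"
    and c: "(\<Sum>i<n. (c i)\<^sup>2) = real n" and k: "0 < k" and \<sigma>: "0 < \<sigma>"
    and hyp: "\<sigma> * sqrt (((real n - k)\<^sup>2 + k\<^sup>2) / real n) \<le> (1 / real n) * (\<Sum>i<n. ((c i)\<^sup>2 - 1) * ev i)"
  shows "real n - k < (c p)\<^sup>2"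
proof (rule ccontr)
  assume "\<not> real n - k < (c p)\<^sup>2"
  then have cp: "(c p)\<^sup>2 \<le> real n - k" by simp
  have n: "0 < real n" using p by simp
  define w where "w i = (c i)\<^sup>2 / real n" for i
  define \<beta> where "\<beta> i = ev i - \<mu>" for i
  define s where "s = (real n - k) / real n"
  define X where "X = ((real n - k)\<^sup>2 + k\<^sup>2) / real n"
  have w_sum: "(\<Sum>i<n. w i) = 1" using c n by (simp add: w_def flip: sum_divide_distrib)
  have \<beta>_sum: "(\<Sum>i<n. \<beta> i) = 0" using n by (simp add: \<beta>_def \<mu>_def sum_subtractf)
  have "(1 / real n) * (\<Sum>i<n. ((c i)\<^sup>2 - 1) * ev i) = (\<Sum>i<n. w i * ev i) - \<mu>"
    by (simp add: w_def \<mu>_def left_diff_distrib sum_subtractf sum_divide_distrib right_diff_distrib)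
  also have "\<dots> = (\<Sum>i<n. w i * \<beta> i)"
    by (simp add: \<beta>_def right_diff_distrib sum_subtractf w_sum flip: sum_distrib_right)
  finally have lhs: "(1 / real n) * (\<Sum>i<n. ((c i)\<^sup>2 - 1) * ev i) = (\<Sum>i<n. w i * \<beta> i)" .
  have wp: "w p \<le> s" using cp n by (simp add: w_def s_def divide_right_mono)
  have s: "s < 1" using k n by (simp add: s_def field_simps)
  obtain w' where w': "(\<Sum>i<n. w' i) = 1" "(\<Sum>i<n. (w' i)\<^sup>2) \<le> s\<^sup>2 + (1 - s)\<^sup>2"
    "(\<Sum>i<n. w i * \<beta> i) \<le> (\<Sum>i<n. w' i * \<beta> i)"
    using shift_weight_to_maximum[OF p _ w_sum _ wp s, of \<beta>] top by (auto simp: w_def \<beta>_def)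
  have "(\<Sum>i<n. w i * \<beta> i) \<le> sqrt (\<Sum>i<n. (\<beta> i)\<^sup>2) * sqrt ((\<Sum>i<n. (w' i)\<^sup>2) - 1 / real n)"
    using w'(3) centered_weighted_sum_le[OF w'(1) \<beta>_sum] by linarith
  also have "\<dots> \<le> sqrt (\<Sum>i<n. (\<beta> i)\<^sup>2) * sqrt (s\<^sup>2 + (1 - s)\<^sup>2 - 1 / real n)"
    using w'(2) by (intro mult_left_mono real_sqrt_le_mono) (auto intro: sum_nonneg)
  also have "(\<Sum>i<n. (\<beta> i)\<^sup>2) = real n * \<sigma>\<^sup>2"
    using n by (simp add: \<sigma>_def \<beta>_def sum_nonneg)
  also have "s\<^sup>2 + (1 - s)\<^sup>2 - 1 / real n = (X - 1) / real n"
    using n by (simp add: s_def X_def field_simps power2_eq_square)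
  also have "sqrt (real n * \<sigma>\<^sup>2) * sqrt ((X - 1) / real n) = \<sigma> * sqrt (X - 1)"
    using n \<sigma> by (simp add: real_sqrt_mult real_sqrt_divide)
  also have "\<dots> < \<sigma> * sqrt X" using \<sigma> by simp
  finally show False using hyp lhs by (simp add: X_def)
qed

lemma sum_off_diagonal_eq:
  fixes f :: "nat \<Rightarrow> nat \<Rightarrow> 'a :: ab_group_add"
  shows "(\<Sum>i<n. \<Sum>j<n. if i \<noteq> j then f i j else 0) = (\<Sum>i<n. \<Sum>j<n. f i j) - (\<Sum>i<n. f i i)"
proof -
  have "(\<Sum>j<n. f i j) = (\<Sum>j<n. if i \<noteq> j then f i j else 0) + f i i" if "i < n" for i
  proof -
    have "(\<Sum>j<n. f i j) = (\<Sum>j<n. (if i \<noteq> j then f i j else 0) + (if j = i then f i j else 0))"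
      by (rule sum.cong) auto
    then show ?thesis using that by (simp add: sum.distrib)
  qed
  then show ?thesis by (simp add: sum.distrib)
qed

lemma order_prod_linear_factors:
  "order a (\<Prod>x\<leftarrow>xs. [:-x, 1:]) = card {i. i < length xs \<and> xs ! i = a}"
proof -
  have "order a (\<Prod>x\<leftarrow>xs. [:-x, 1:]) = length (filter ((=) a) xs)"
  proof (induction xs)
    case (Cons x xs)
    have "(\<Prod>y\<leftarrow>xs. [:-y, 1:]) \<noteq> 0" by auto
    then show ?case using Cons.IH by (simp add: order_mult order_linear' del: mult_pCons_left)
  qed simp
  then show ?thesis by (simp add: length_filter_conv_card eq_commute)
qed

definition orthogonal_mats :: "nat \<Rightarrow> 'a :: comm_ring_1 mat set" where
  "orthogonal_mats n = {P \<in> carrier_mat n n. transpose_mat P * P = 1\<^sub>m n}"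

lemma orthogonal_matsD:
  fixes P :: "'a :: field mat"
  assumes "P \<in> orthogonal_mats n"
  shows "P \<in> carrier_mat n n" "transpose_mat P * P = 1\<^sub>m n" "P * transpose_mat P = 1\<^sub>m n"
  using assms mat_mult_left_right_inverse[of "transpose_mat P" n P]
  by (auto simp: orthogonal_mats_def)

lemma orthogonal_mats_mult:
  assumes "P \<in> orthogonal_mats n" "Q \<in> orthogonal_mats n"
  shows "P * Q \<in> orthogonal_mats n"
proof -
  from assms have P: "P \<in> carrier_mat n n" and Q: "Q \<in> carrier_mat n n"
    by (auto simp: orthogonal_mats_def)
  have "transpose_mat (P * Q) * (P * Q) = transpose_mat Q * ((transpose_mat P * P) * Q)"
    using P Q by (simp add: transpose_mult[OF P Q] assoc_mult_mat[of _ n n _ n _ n])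
  also have "\<dots> = 1\<^sub>m n" using assms Q by (simp add: orthogonal_mats_def)
  finally show ?thesis using P Q by (simp add: orthogonal_mats_def)
qed

lemma mult_four_block_diag_mat:
  assumes "A1 \<in> carrier_mat k k" "B1 \<in> carrier_mat k k" "A2 \<in> carrier_mat m m" "B2 \<in> carrier_mat m m"
  shows "four_block_mat A1 (0\<^sub>m k m) (0\<^sub>m m k) A2 * four_block_mat B1 (0\<^sub>m k m) (0\<^sub>m m k) B2
    = four_block_mat (A1 * B1) (0\<^sub>m k m) (0\<^sub>m m k) (A2 * B2)"
  using assms by (subst mult_four_block_mat[of _ k k _ m _ m _ _ k _ m]) auto

lemma orthogonal_mats_four_block:
  assumes "P \<in> orthogonal_mats k" "Q \<in> orthogonal_mats m"
  shows "four_block_mat P (0\<^sub>m k m) (0\<^sub>m m k) Q \<in> orthogonal_mats (k + m)"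
proof -
  from assms have P: "P \<in> carrier_mat k k" and Q: "Q \<in> carrier_mat m m"
    by (auto simp: orthogonal_mats_def)
  have "transpose_mat (four_block_mat P (0\<^sub>m k m) (0\<^sub>m m k) Q)
      = four_block_mat (transpose_mat P) (0\<^sub>m k m) (0\<^sub>m m k) (transpose_mat Q)"
    using P Q by (subst transpose_four_block_mat) auto
  then show ?thesis
    using assms P Q by (simp add: mult_four_block_diag_mat orthogonal_mats_def)
qed

lemma orthogonal_mats_col_scalar_prod:
  fixes P :: "'a :: field mat"
  assumes P: "P \<in> orthogonal_mats n" and "i < n" "j < n"
  shows "col P i \<bullet> col P j = (if i = j then 1 else 0)"
proof -
  have "col P i \<bullet> col P j = (transpose_mat P * P) $$ (i, j)"
    using assms orthogonal_matsD(1)[OF P] by simp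
  also have "\<dots> = (if i = j then 1 else 0)"
    using assms by (simp add: orthogonal_matsD(2)[OF P])
  finally show ?thesis .
qed

lemma real_vec_conjugate [simp]: "conjugate (v :: real vec) = v"
  by (rule eq_vecI) auto

lemma orthogonal_mats_of_corthogonal:
  fixes ws :: "real vec list"
  assumes ws: "set ws \<subseteq> carrier_vec n" "corthogonal ws" "length ws = n"
  shows "mat_of_cols n (map (\<lambda>w. (1 / sqrt (w \<bullet> w)) \<cdot>\<^sub>v w) ws) \<in> orthogonal_mats n"
    (is "?W \<in> _")
proof -
  have "col ?W i \<bullet> col ?W j = (if i = j then 1 else 0)" if ij: "i < n" "j < n" for i j
  proof -
    have carr: "ws ! i \<in> carrier_vec n" "ws ! j \<in> carrier_vec n" using ws ij by auto
    have orth: "ws ! i \<bullet> ws ! j = 0 \<longleftrightarrow> i \<noteq> j"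
      using corthogonalD[OF ws(2)] ws(3) ij by simp
    have "ws ! i \<bullet> ws ! i \<noteq> 0" using corthogonalD[OF ws(2)] ws(3) ij by simp
    then have pos: "ws ! i \<bullet> ws ! i > 0"
      using conjugate_square_ge_0_vec[of "ws ! i"] by simp
    have "col ?W i \<bullet> col ?W j = (ws ! i \<bullet> ws ! j) / (sqrt (ws ! i \<bullet> ws ! i) * sqrt (ws ! j \<bullet> ws ! j))"
      using ws ij carr by simp
    then show ?thesis using orth pos by (cases "i = j") auto
  qed
  then show ?thesis using ws by (auto simp: orthogonal_mats_def)
qed

lemma orthogonal_mats_with_first_col:
  fixes v :: "real vec"
  assumes v: "v \<in> carrier_vec n" and unit: "v \<bullet> v = 1"
  obtains W where "W \<in> orthogonal_mats n" "col W 0 = v"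
proof -
  have v0: "v \<noteq> 0\<^sub>v n" using unit v by auto
  then have n: "n \<noteq> 0" using v by auto
  interpret cof_vec_space n "TYPE(real)" .
  obtain vs where b: "basis_completion v = v # vs"
    using basis_completion(6,7)[OF v v0] n by (cases "basis_completion v") auto
  define ws where "ws = gram_schmidt n (v # vs)"
  have ws: "set ws \<subseteq> carrier_vec n" "corthogonal ws" "length ws = n"
    using gram_schmidt_result[OF _ _ _ ws_def] basis_completion[OF v v0] unfolding b
    by (auto simp: basis_def)
  have "ws ! 0 = v" using gram_schmidt_hd[OF v, of vs] ws(3) n
    unfolding ws_def[symmetric] by (cases ws) auto
  then have "col (mat_of_cols n (map (\<lambda>w. (1 / sqrt (w \<bullet> w)) \<cdot>\<^sub>v w) ws)) 0 = v"
    using ws n unit by (subst col_mat_of_cols) auto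
  with orthogonal_mats_of_corthogonal[OF ws] show ?thesis by (rule that)
qed

lemma orthogonal_conj_first_col:
  fixes A W :: "'a :: field mat"
  assumes A: "A \<in> carrier_mat n n" and W: "W \<in> orthogonal_mats n" and i: "i < n"
    and eig: "A *\<^sub>v col W 0 = e \<cdot>\<^sub>v col W 0"
  shows "(transpose_mat W * A * W) $$ (i, 0) = (if i = 0 then e else 0)"
proof -
  note Wc = orthogonal_matsD(1)[OF W]
  have n: "0 < n" using i by simp
  have "(transpose_mat W * A * W) $$ (i, 0) = col W i \<bullet> col (A * W) 0"
    using A Wc i n by (simp add: assoc_mult_mat[of _ n n _ n _ n])
  also have "col (A * W) 0 = e \<cdot>\<^sub>v col W 0" using A Wc n by (simp only: col_mult2 eig)
  also have "col W i \<bullet> (e \<cdot>\<^sub>v col W 0) = e * (col W i \<bullet> col W 0)" using Wc by simp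
  finally show ?thesis using orthogonal_mats_col_scalar_prod[OF W i n] by simp
qed

lemma symmetric_orthogonal_conj_block:
  fixes A W :: "real mat"
  assumes A: "A \<in> carrier_mat n n" and sym: "transpose_mat A = A"
    and W: "W \<in> orthogonal_mats n" and n: "0 < n"
    and eig: "A *\<^sub>v col W 0 = e \<cdot>\<^sub>v col W 0"
  obtains B where "B \<in> carrier_mat (n - 1) (n - 1)" "transpose_mat B = B"
    "transpose_mat W * A * W = four_block_mat (mat 1 1 (\<lambda>_. e)) (0\<^sub>m 1 (n - 1)) (0\<^sub>m (n - 1) 1) B"
proof -
  define A' where "A' = transpose_mat W * A * W"
  have A': "A' \<in> carrier_mat n n" using A orthogonal_matsD(1)[OF W] by (simp add: A'_def)
  have A'_sym: "transpose_mat A' = A'"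
    using A orthogonal_matsD(1)[OF W] sym
    by (simp add: A'_def transpose_mult[of _ n n _ n] assoc_mult_mat[of _ n n _ n _ n])
  note col0 = orthogonal_conj_first_col[OF A W _ eig, folded A'_def]
  have swap: "A' $$ (j, i) = A' $$ (i, j)" if "i < n" "j < n" for i j
  proof -
    have "A' $$ (j, i) = transpose_mat A' $$ (i, j)" using A' that by simp
    then show ?thesis by (simp add: A'_sym)
  qed
  define B where "B = mat (n - 1) (n - 1) (\<lambda>(i, j). A' $$ (Suc i, Suc j))"
  show thesis
  proof
    show "B \<in> carrier_mat (n - 1) (n - 1)" by (simp add: B_def)
    show "transpose_mat B = B"
      by (rule eq_matI) (auto simp: B_def swap)
    show "transpose_mat W * A * W = four_block_mat (mat 1 1 (\<lambda>_. e)) (0\<^sub>m 1 (n - 1)) (0\<^sub>m (n - 1) 1) B"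
      (is "_ = ?D")
      unfolding A'_def[symmetric]
    proof (rule eq_matI)
      fix i j assume "i < dim_row ?D" "j < dim_col ?D"
      then have ij: "i < n" "j < n" using n by (auto simp: B_def)
      show "A' $$ (i, j) = ?D $$ (i, j)"
        using ij col0[OF ij(1)] col0[OF ij(2)] swap[OF ij] by (auto simp: B_def)
    qed (use A' n in \<open>auto simp: B_def\<close>)
  qed
qed

lemma unit_eigenvector_exists:
  fixes A :: "real mat"
  assumes A: "A \<in> carrier_mat n n" and "eigenvalue A e"
  obtains v where "v \<in> carrier_vec n" "v \<bullet> v = 1" "A *\<^sub>v v = e \<cdot>\<^sub>v v"
proof -
  obtain u where u: "u \<in> carrier_vec n" "u \<noteq> 0\<^sub>v n" "A *\<^sub>v u = e \<cdot>\<^sub>v u"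
    using assms unfolding eigenvalue_def eigenvector_def by auto
  have pos: "u \<bullet> u > 0" using conjugate_square_greater_0_vec[OF u(1)] u(2) by simp
  define v where "v = (1 / sqrt (u \<bullet> u)) \<cdot>\<^sub>v u"
  show thesis
  proof
    show "v \<in> carrier_vec n" using u by (simp add: v_def)
    show "v \<bullet> v = 1" using u pos by (simp add: v_def)
    show "A *\<^sub>v v = e \<cdot>\<^sub>v v"
      using u A by (simp add: v_def mult_mat_vec smult_smult_assoc mult.commute)
  qed
qed

lemma symmetric_deflation:
  fixes A :: "real mat"
  assumes A: "A \<in> carrier_mat n n" and sym: "transpose_mat A = A" and "eigenvalue A e"
  obtains W B where "W \<in> orthogonal_mats n" "0 < n" "B \<in> carrier_mat (n - 1) (n - 1)" "transpose_mat B = B"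
    "transpose_mat W * A * W = four_block_mat (mat 1 1 (\<lambda>_. e)) (0\<^sub>m 1 (n - 1)) (0\<^sub>m (n - 1) 1) B"
proof -
  obtain v where v: "v \<in> carrier_vec n" "v \<bullet> v = 1" "A *\<^sub>v v = e \<cdot>\<^sub>v v"
    using unit_eigenvector_exists[OF A] assms(3) by blast
  then have n: "0 < n" by (cases n) (auto simp: scalar_prod_def)
  obtain W where "W \<in> orthogonal_mats n" "col W 0 = v"
    using orthogonal_mats_with_first_col[OF v(1,2)] .
  with symmetric_orthogonal_conj_block[OF A sym _ n] v(3) n that show thesis by blast
qed

lemma char_poly_orthogonal_conj:
  fixes A W :: "'a :: field mat"
  assumes "A \<in> carrier_mat n n" "W \<in> orthogonal_mats n"
  shows "char_poly (transpose_mat W * A * W) = char_poly A"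
proof (rule char_poly_similar)
  show "similar_mat (transpose_mat W * A * W) A"
    unfolding similar_mat_def
    by (rule exI[of _ "transpose_mat W"], rule exI[of _ W], rule similar_mat_witI[of _ _ n])
      (use assms orthogonal_matsD[OF assms(2)] in auto)
qed

lemma orthogonal_conj_diagonalization:
  fixes A W Q D :: "'a :: field mat"
  assumes W: "W \<in> orthogonal_mats n" and A: "A \<in> carrier_mat n n"
    and Q: "Q \<in> carrier_mat n n" and D: "D \<in> carrier_mat n n"
    and conj: "transpose_mat W * A * W * Q = Q * D"
  shows "A * (W * Q) = W * Q * D"
proof -
  note W = orthogonal_matsD[OF W]
  have "A * (W * Q) = (W * transpose_mat W) * (A * (W * Q))" unfolding W(3) using W A Q by simp
  also have "\<dots> = W * (transpose_mat W * A * W * Q)"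
    using W(1) A Q by (simp add: assoc_mult_mat[of _ n n _ n _ n])
  also have "\<dots> = W * Q * D" using W Q D by (simp add: conj)
  finally show ?thesis .
qed

lemma four_block_diagonalization:
  fixes B Q :: "'a :: field mat"
  assumes Q: "Q \<in> orthogonal_mats m" and B: "B \<in> carrier_mat m m"
    and BQ: "B * Q = Q * mat_diag m (\<lambda>i. es ! i)"
  defines "Q' \<equiv> four_block_mat (1\<^sub>m 1) (0\<^sub>m 1 m) (0\<^sub>m m 1) Q"
  shows "Q' \<in> orthogonal_mats (Suc m)"
    and "four_block_mat (mat 1 1 (\<lambda>_. e)) (0\<^sub>m 1 m) (0\<^sub>m m 1) B * Q' = Q' * mat_diag (Suc m) (\<lambda>i. (e # es) ! i)"
proof -
  show "Q' \<in> orthogonal_mats (Suc m)"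
    using orthogonal_mats_four_block[of "1\<^sub>m 1" 1 Q m] Q by (simp add: Q'_def orthogonal_mats_def)
  have diag: "mat_diag (Suc m) (\<lambda>i. (e # es) ! i)
      = four_block_mat (mat 1 1 (\<lambda>_. e)) (0\<^sub>m 1 m) (0\<^sub>m m 1) (mat_diag m (\<lambda>i. es ! i))"
    by (intro eq_matI) (auto simp: mat_diag_def nth_Cons')
  show "four_block_mat (mat 1 1 (\<lambda>_. e)) (0\<^sub>m 1 m) (0\<^sub>m m 1) B * Q' = Q' * mat_diag (Suc m) (\<lambda>i. (e # es) ! i)"
    unfolding Q'_def diag using B Q by (simp add: mult_four_block_diag_mat BQ orthogonal_mats_def)
qed

theorem real_symmetric_orthogonal_diagonalization:
  fixes A :: "real mat"
  assumes "A \<in> carrier_mat n n" "transpose_mat A = A" "char_poly A = (\<Prod>e\<leftarrow>es. [:-e, 1:])"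
  shows "\<exists>P \<in> orthogonal_mats n. A * P = P * mat_diag n (\<lambda>i. es ! i)"
  using assms
proof (induction es arbitrary: n A)
  case Nil
  then have "n = 0" using degree_monic_char_poly[of A n] by auto
  then show ?case using Nil(1) by (intro bexI[of _ "1\<^sub>m 0"]) (auto simp: orthogonal_mats_def mat_diag_def)
next
  case (Cons e es n A)
  note A = Cons.prems(1) and sym = Cons.prems(2)
  have cp: "char_poly A = [:-e, 1:] * (\<Prod>e\<leftarrow>es. [:-e, 1:])" using Cons.prems(3) by simp
  have "eigenvalue A e" unfolding eigenvalue_root_char_poly[OF A] cp by simp
  then obtain W B where W: "W \<in> orthogonal_mats n" and n: "0 < n"
    and B: "B \<in> carrier_mat (n - 1) (n - 1)" "transpose_mat B = B"
    and block: "transpose_mat W * A * W = four_block_mat (mat 1 1 (\<lambda>_. e)) (0\<^sub>m 1 (n - 1)) (0\<^sub>m (n - 1) 1) B"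
    using symmetric_deflation[OF A sym] by blast
  have "[:-e, 1:] * char_poly B = char_poly A"
    using char_poly_orthogonal_conj[OF A W] B(1) unfolding block
    by (subst (asm) char_poly_four_block_zeros_col) (auto simp: char_poly_defs det_def sign_def)
  then have "char_poly B = (\<Prod>e\<leftarrow>es. [:-e, 1:])"
    unfolding cp by (metis mult_cancel_left pCons_eq_0_iff zero_neq_one)
  then obtain Q where Q: "Q \<in> orthogonal_mats (n - 1)" and BQ: "B * Q = Q * mat_diag (n - 1) (\<lambda>i. es ! i)"
    using Cons.IH[OF B(1,2)] by blast
  define Q' where "Q' = four_block_mat (1\<^sub>m 1) (0\<^sub>m 1 (n - 1)) (0\<^sub>m (n - 1) 1) Q"
  have "Q' \<in> orthogonal_mats (Suc (n - 1))"
    and "transpose_mat W * A * W * Q' = Q' * mat_diag (Suc (n - 1)) (\<lambda>i. (e # es) ! i)"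
    unfolding Q'_def block using four_block_diagonalization[OF Q B(1) BQ] by blast+
  then have Q': "Q' \<in> orthogonal_mats n"
    and "transpose_mat W * A * W * Q' = Q' * mat_diag n (\<lambda>i. (e # es) ! i)"
    using n by simp_all
  then have "A * (W * Q') = W * Q' * mat_diag n (\<lambda>i. (e # es) ! i)"
    using orthogonal_conj_diagonalization[OF W A _ mat_diag_dim] Q' by (simp add: orthogonal_mats_def)
  then show ?case using orthogonal_mats_mult[OF W Q'] by blast
qed

lemma mat_diag_mult_vec:
  assumes "y \<in> carrier_vec n"
  shows "mat_diag n f *\<^sub>v y = vec n (\<lambda>i. f i * y $ i)"
proof (rule eq_vecI)
  fix i assume "i < dim_vec (vec n (\<lambda>i. f i * y $ i))"
  then have i: "i < n" by simp
  have "(mat_diag n f *\<^sub>v y) $ i = (\<Sum>j<n. (if i = j then f j else 0) * y $ j)"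
    using assms i by (simp add: mat_diag_def scalar_prod_def lessThan_atLeast0)
  also have "\<dots> = (\<Sum>j<n. if j = i then f i * y $ i else 0)"
    by (rule sum.cong) auto
  also have "\<dots> = f i * y $ i" using i by simp
  finally show "(mat_diag n f *\<^sub>v y) $ i = vec n (\<lambda>i. f i * y $ i) $ i" using i by simp
qed (simp add: mat_diag_def)

lemma scalar_prod_conj_mat_diag:
  fixes P :: "'a :: comm_ring_1 mat"
  assumes P: "P \<in> carrier_mat n n" and x: "x \<in> carrier_vec n"
  shows "x \<bullet> (P * mat_diag n f * transpose_mat P *\<^sub>v x) = (\<Sum>i<n. f i * (col P i \<bullet> x)\<^sup>2)"
proof -
  define y where "y = transpose_mat P *\<^sub>v x"
  have y: "y \<in> carrier_vec n" and y_nth: "\<And>i. i < n \<Longrightarrow> y $ i = col P i \<bullet> x"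
    using P x by (auto simp: y_def)
  have "x \<bullet> (P * mat_diag n f * transpose_mat P *\<^sub>v x) = x \<bullet> (P *\<^sub>v (mat_diag n f *\<^sub>v y))"
    using P x
    by (simp add: y_def assoc_mult_mat_vec[of "P * mat_diag n f" n n "transpose_mat P" n]
        assoc_mult_mat_vec[of P n n "mat_diag n f" n])
  also have "\<dots> = y \<bullet> (mat_diag n f *\<^sub>v y)"
    using transpose_vec_mult_scalar[OF P mult_mat_vec_carrier[OF mat_diag_dim y] x]
    by (simp add: y_def)
  also have "\<dots> = (\<Sum>i<n. f i * (col P i \<bullet> x)\<^sup>2)"
    using y by (simp add: mat_diag_mult_vec scalar_prod_def lessThan_atLeast0 y_nth power2_eq_square
        ac_simps)
  finally show ?thesis .
qed

lemma eigenvector_uminus: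
  assumes "A \<in> carrier_mat n n" and "eigenvector A v e"
  shows "eigenvector A (- v) e"
proof -
  have v: "v \<in> carrier_vec n" "v \<noteq> 0\<^sub>v n" "A *\<^sub>v v = e \<cdot>\<^sub>v v"
    using assms by (auto simp: eigenvector_def)
  have "- v \<noteq> 0\<^sub>v n" using v(1,2) by (metis uminus_uminus_vec uminus_zero_vec)
  moreover have "A *\<^sub>v (- v) = e \<cdot>\<^sub>v (- v)"
  proof (rule eq_vecI)
    fix i assume "i < dim_vec (e \<cdot>\<^sub>v (- v))"
    then have i: "i < n" using v by simp
    have "(A *\<^sub>v (- v)) $ i = - (A *\<^sub>v v) $ i" using assms(1) v(1) i by simp
    also have "(A *\<^sub>v v) $ i = e * v $ i" using v i by simp
    finally show "(A *\<^sub>v (- v)) $ i = (e \<cdot>\<^sub>v (- v)) $ i" using v i by simp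
  qed (use assms(1) v in simp)
  ultimately show ?thesis using assms v by (simp add: eigenvector_def)
qed

lemma eigenvector_with_many_nonneg_entries:
  fixes A :: "real mat" and v :: "real vec"
  assumes A: "A \<in> carrier_mat n n" and v: "eigenvector A v e"
    and large_sum: "real m * (v \<bullet> v) < (\<Sum>i<n. v $ i)\<^sup>2"
  shows "\<exists>u. eigenvector A u e \<and> m + 1 \<le> card {i. i < n \<and> 0 \<le> u $ i}"
proof (rule ccontr)
  assume "\<not> ?thesis"
  then have few: "card {i. i < n \<and> 0 \<le> u $ i} \<le> m" if "eigenvector A u e" for u
    using that by force
  have vc: "v \<in> carrier_vec n" using v A by (simp add: eigenvector_def)
  have "card {i \<in> {..<n}. 0 \<le> v $ i} \<le> m"
    using few[OF v] by (simp add: conj_commute)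
  moreover have "{i \<in> {..<n}. v $ i \<le> 0} = {i. i < n \<and> 0 \<le> (- v) $ i}"
    using vc by auto
  then have "card {i \<in> {..<n}. v $ i \<le> 0} \<le> m"
    using few[OF eigenvector_uminus[OF A v]] by simp
  ultimately have "(\<Sum>i<n. v $ i)\<^sup>2 \<le> real m * (\<Sum>i<n. (v $ i)\<^sup>2)"
    by (intro square_sum_le_sign_count) auto
  also have "(\<Sum>i<n. (v $ i)\<^sup>2) = v \<bullet> v"
    using vc by (simp add: scalar_prod_def lessThan_atLeast0 power2_eq_square)
  finally show False using large_sum by simp
qed

locale orthonormal_eigenbasis =
  fixes A P :: "real mat" and n :: nat and ev :: "nat \<Rightarrow> real"
  assumes A: "A \<in> carrier_mat n n" and P: "P \<in> orthogonal_mats n"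
    and diagonalizes: "A * P = P * mat_diag n ev"
begin

lemma P_carrier: "P \<in> carrier_mat n n"
  using orthogonal_matsD(1)[OF P] .

lemma mult_col:
  assumes "i < n"
  shows "A *\<^sub>v col P i = ev i \<cdot>\<^sub>v col P i"
proof -
  have "A *\<^sub>v col P i = col (P * mat_diag n ev) i"
    using A P_carrier assms by (simp only: col_mult2 flip: diagonalizes)
  also have "\<dots> = ev i \<cdot>\<^sub>v col P i"
    using P_carrier assms by (auto simp: mat_diag_mult_right)
  finally show ?thesis .
qed

lemma col_norm: "i < n \<Longrightarrow> col P i \<bullet> col P i = 1"
  using orthogonal_mats_col_scalar_prod[OF P] by simp

lemma eigenvector_col: "i < n \<Longrightarrow> eigenvector A (col P i) (ev i)"
  using mult_col col_norm[of i] A P_carrier by (auto simp: eigenvector_def)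

lemma decomposition: "A = P * mat_diag n ev * transpose_mat P"
proof -
  have "A = A * (P * transpose_mat P)" using A orthogonal_matsD(3)[OF P] by simp
  also have "\<dots> = P * mat_diag n ev * transpose_mat P"
    using A P_carrier by (simp flip: diagonalizes)
  finally show ?thesis .
qed

lemma quadratic_form:
  assumes "x \<in> carrier_vec n"
  shows "x \<bullet> (A *\<^sub>v x) = (\<Sum>i<n. ev i * (col P i \<bullet> x)\<^sup>2)"
  by (subst decomposition) (rule scalar_prod_conj_mat_diag[OF P_carrier assms])

lemma sum_squares_coords:
  assumes "x \<in> carrier_vec n"
  shows "x \<bullet> x = (\<Sum>i<n. (col P i \<bullet> x)\<^sup>2)"
  using scalar_prod_conj_mat_diag[OF P_carrier assms, of "\<lambda>_. 1"] assms P_carrier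
    orthogonal_matsD(3)[OF P]
  by simp

lemma trace_eq_sum_eigenvalues: "(\<Sum>j<n. A $$ (j, j)) = (\<Sum>i<n. ev i)"
proof -
  have "(\<Sum>j<n. A $$ (j, j)) = (\<Sum>j<n. \<Sum>i<n. ev i * (P $$ (j, i))\<^sup>2)"
  proof (rule sum.cong[OF refl])
    fix j assume "j \<in> {..<n}"
    then have j: "j < n" by simp
    have "A $$ (j, j) = unit_vec n j \<bullet> (A *\<^sub>v unit_vec n j)" using A j by simp
    also have "\<dots> = (\<Sum>i<n. ev i * (P $$ (j, i))\<^sup>2)"
      using P_carrier j by (simp add: quadratic_form)
    finally show "A $$ (j, j) = (\<Sum>i<n. ev i * (P $$ (j, i))\<^sup>2)" .
  qed
  also have "\<dots> = (\<Sum>i<n. ev i * (col P i \<bullet> col P i))"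
    using P_carrier
    by (subst sum.swap) (simp add: sum_distrib_left scalar_prod_def lessThan_atLeast0 power2_eq_square)
  also have "\<dots> = (\<Sum>i<n. ev i)"
    using orthogonal_mats_col_scalar_prod[OF P] by simp
  finally show ?thesis .
qed

lemma sum_off_diagonal:
  "(\<Sum>i<n. \<Sum>j<n. if i \<noteq> j then A $$ (i, j) else 0)
    = (\<Sum>i<n. ((col P i \<bullet> vec n (\<lambda>_. 1))\<^sup>2 - 1) * ev i)"
proof -
  have "(\<Sum>i<n. \<Sum>j<n. A $$ (i, j)) = vec n (\<lambda>_. 1) \<bullet> (A *\<^sub>v vec n (\<lambda>_. 1))"
    using A by (simp add: scalar_prod_def lessThan_atLeast0)
  also have "\<dots> = (\<Sum>i<n. ev i * (col P i \<bullet> vec n (\<lambda>_. 1))\<^sup>2)"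
    by (simp add: quadratic_form)
  finally have "(\<Sum>i<n. \<Sum>j<n. A $$ (i, j)) = \<dots>" .
  then show ?thesis
    by (simp add: sum_off_diagonal_eq trace_eq_sum_eigenvalues sum_subtractf algebra_simps)
qed

lemma sum_coords_ones: "(\<Sum>i<n. (col P i \<bullet> vec n (\<lambda>_. 1))\<^sup>2) = real n"
  using sum_squares_coords[of "vec n (\<lambda>_. 1)"] by (simp add: scalar_prod_def)

lemma large_coords_eq:
  assumes "p < n" "q < n"
    and "real n < (col P p \<bullet> vec n (\<lambda>_. 1))\<^sup>2 + (col P q \<bullet> vec n (\<lambda>_. 1))\<^sup>2"
  shows "p = q"
proof (rule ccontr)
  assume "p \<noteq> q"
  then have "(col P p \<bullet> vec n (\<lambda>_. 1))\<^sup>2 + (col P q \<bullet> vec n (\<lambda>_. 1))\<^sup>2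
      \<le> (\<Sum>i<n. (col P i \<bullet> vec n (\<lambda>_. 1))\<^sup>2)"
    using assms sum_mono2[of "{..<n}" "{p, q}" "\<lambda>i. (col P i \<bullet> vec n (\<lambda>_. 1))\<^sup>2"] by simp
  then show False using assms(3) sum_coords_ones by simp
qed

lemma top_coord_large:
  fixes k :: real
  defines "\<mu> \<equiv> (1 / real n) * (\<Sum>j<n. ev j)"
  defines "\<sigma> \<equiv> sqrt ((1 / real n) * (\<Sum>i<n. (ev i - \<mu>)\<^sup>2))"
  assumes "p < n" and "\<And>i. i < n \<Longrightarrow> ev i \<le> ev p" and "0 < k" and "0 < \<sigma>"
    and "\<sigma> * sqrt (((real n - k)\<^sup>2 + k\<^sup>2) / real n)
      \<le> (1 / real n) * (\<Sum>i<n. \<Sum>j<n. if i \<noteq> j then A $$ (i, j) else 0)"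
  shows "real n - k < (col P p \<bullet> vec n (\<lambda>_. 1))\<^sup>2"
  using large_top_weight[of p n ev "\<lambda>i. col P i \<bullet> vec n (\<lambda>_. 1)" k] assms sum_coords_ones
  by (simp add: sum_off_diagonal)

end

theorem corollary8:
  fixes A :: "real mat" and n k :: nat and ls :: "real list"
  assumes carr: "A \<in> carrier_mat n n"
    and symm: "transpose_mat A = A"
    and eig: "eigenvalue_list A ls"
    and sig_pos: "sqrt ((1 / real n) * (\<Sum>i<n. (ls ! i - (1 / real n) * (\<Sum>j<n. ls ! j))\<^sup>2)) > 0"
    and k1: "1 \<le> k" and kn: "real k < real n / 2"
    and hyp: "(1 / real n) * (\<Sum>i<n. \<Sum>j<n. if i \<noteq> j then A $$ (i, j) else 0)
              \<ge> sqrt ((1 / real n) * (\<Sum>i<n. (ls ! i - (1 / real n) * (\<Sum>j<n. ls ! j))\<^sup>2))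
                 * sqrt (((real n - real k)\<^sup>2 + (real k)\<^sup>2) / real n)"
  shows "order (Max (set ls)) (char_poly A) = 1
       \<and> (\<exists>v. eigenvector A v (Max (set ls))
              \<and> card {i. i < n \<and> v $ i \<ge> 0} \<ge> n - k + 1)"
proof -
  define M where "M = Max (set ls)"
  have len: "length ls = n" and cp: "char_poly A = (\<Prod>a\<leftarrow>ls. [:-a, 1:])"
    using eig carr by (auto simp: eigenvalue_list_def)
  obtain P where "P \<in> orthogonal_mats n" "A * P = P * mat_diag n (\<lambda>i. ls ! i)"
    using real_symmetric_orthogonal_diagonalization[OF carr symm cp] by blast
  then interpret orthonormal_eigenbasis A P n "\<lambda>i. ls ! i"
    using carr by unfold_locales
  have top: "real n - real k < (col P p \<bullet> vec n (\<lambda>_. 1))\<^sup>2" if "p < n" "ls ! p = M" for p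
    using top_coord_large[of p "real k"] that len sig_pos hyp k1 by (auto simp: M_def)
  have "M \<in> set ls" unfolding M_def using len kn by (intro Max_in) auto
  then obtain p where p: "p < n" "ls ! p = M" using len by (auto simp: in_set_conv_nth)
  have "{i. i < n \<and> ls ! i = M} = {p}"
    using p top[OF p] top large_coords_eq[of _ p] kn by fastforce
  then have "order M (char_poly A) = 1" by (simp add: cp order_prod_linear_factors len)
  moreover have "\<exists>v. eigenvector A v M \<and> n - k + 1 \<le> card {i. i < n \<and> 0 \<le> v $ i}"
    using eigenvector_with_many_nonneg_entries[OF carr eigenvector_col[OF p(1)], of "n - k"]
      top[OF p] col_norm[OF p(1)] p P_carrier kn
    by (simp add: scalar_prod_def lessThan_atLeast0)
  ultimately show ?thesis by (simp add: M_def)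
qed

end
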